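(* Let $G$ be a hereditarily normal topological group that contains a non-trivial convergent sequence. Then $G$ has a $G_\delta$-diagonal.
   Context: All spaces are assumed to be $T_1$. A space $X$ has a $G_\delta$-diagonal if $\{\langle x,x\rangle : x\in X\}$ is the intersection of a countable family of open subsets of $X\times X$. A non-trivial convergent sequence is a subspace homeomorphic to the subspace $\{0\}\cup\{1/n : n=1,2,3,\dots\}$ of the real line. *)

theory Defs
  imports "HOL-Analysis.Analysis"
begin

text \<open>A (not necessarily abelian, additively written) group on a topological space type
  is a topological group if multiplication and inversion are continuous
  (multiplication w.r.t. the product topology on the product type).\<close>
definition topological_group :: "('a::{topological_space, group_add}) itself \<Rightarrow> bool" where
  "topological_group _ \<longleftrightarrow>
     continuous_on (UNIV :: ('a \<times> 'a) set) (\<lambda>p. fst p + snd p) \<and>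
     continuous_on (UNIV :: 'a set) uminus"

definition hereditarily_normal :: "('a::topological_space) itself \<Rightarrow> bool" where
  "hereditarily_normal _ \<longleftrightarrow> (\<forall>S :: 'a set. normal_space (subtopology euclidean S))"

definition has_nontrivial_convergent_sequence :: "('a::topological_space) itself \<Rightarrow> bool" where
  "has_nontrivial_convergent_sequence _ \<longleftrightarrow>
     (\<exists>S :: 'a set. subtopology euclidean S homeomorphic_space
        subtopology (euclidean :: real topology) (insert 0 {1 / real n | n. n \<ge> 1}))"

definition has_gdelta_diagonal :: "('a::topological_space) itself \<Rightarrow> bool" where
  "has_gdelta_diagonal _ \<longleftrightarrow>
     (\<exists>\<U> :: ('a \<times> 'a) set set. countable \<U> \<and> (\<forall>U\<in>\<U>. open U) \<and>
        \<Inter>\<U> = {(x, x) | x. True})"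

end

theory Submission
  imports Defs
begin

(* Let t be a sequence of points t n \<noteq> p converging to p, taken from the
   embedded copy of {0} \<union> {1/n}.  Hereditary normality (applied to the subspace X - {p})
   separates the closed set range t from the closed set of points lying outside all
   Hausdorff neighbourhoods D n of the t n: we get disjoint open U, V with range t \<subseteq> V and
   (\<Inter>n. E n) - {p} \<subseteq> U.  In a group, translating V by -t n + p gives open sets
   containing p; since x - p + t n \<longrightarrow> x, every x \<in> U \<inter> \<Inter>E other than p falls outside one of
   these translates.  Hence {p} is a G_delta set, and pulling this family back along the
   continuous map (x, y) \<mapsto> x - y + p shows that the diagonal is a G_delta set. *)

lemma continuous_on_add_of_continuous_addition:
  fixes f g :: "'b::topological_space \<Rightarrow> 'a::{topological_space,group_add}"
  assumes "continuous_on (UNIV :: ('a \<times> 'a) set) (\<lambda>p. fst p + snd p)"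
    and "continuous_on UNIV f" "continuous_on UNIV g"
  shows "continuous_on UNIV (\<lambda>x. f x + g x)"
  using continuous_on_compose2[OF assms(1) continuous_on_Pair[OF assms(2,3)]] by simp

text \<open>If \<open>t n \<longrightarrow> p\<close>, then the translated sequence \<open>x - p + t n\<close> converges to \<open>x\<close>:
  this is how the convergent sequence is moved to an arbitrary point of the group.\<close>
lemma translated_sequence_tendsto:
  fixes t :: "nat \<Rightarrow> 'a::{topological_space,group_add}"
  assumes add: "continuous_on (UNIV :: ('a \<times> 'a) set) (\<lambda>p. fst p + snd p)"
    and lim: "t \<longlonglongrightarrow> p"
  shows "(\<lambda>n. x + (- p + t n)) \<longlonglongrightarrow> x"
proof -
  have left_translation: "continuous_on UNIV (\<lambda>y. c + y)" for c :: 'a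
    by (rule continuous_on_add_of_continuous_addition[OF add continuous_on_const continuous_on_id])
  have "(\<lambda>n. - p + t n) \<longlonglongrightarrow> - p + p"
    by (rule continuous_on_tendsto_compose[OF left_translation lim]) auto
  then have "(\<lambda>n. - p + t n) \<longlonglongrightarrow> 0" by simp
  from continuous_on_tendsto_compose[OF left_translation this, of x] show ?thesis by simp
qed

text \<open>A space containing a copy of \<open>{0} \<union> {1/n}\<close> contains a sequence of points distinct
  from its limit: the images of \<open>1/(n+1)\<close> and of \<open>0\<close>.\<close>
lemma nontrivial_convergent_sequence_obtain:
  fixes G :: "('a::topological_space) itself"
  assumes "has_nontrivial_convergent_sequence G"
  obtains t :: "nat \<Rightarrow> 'a" and p where "t \<longlonglongrightarrow> p" "\<And>n. t n \<noteq> p"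
proof -
  define K where "K = insert (0::real) {1 / real n | n. n \<ge> 1}"
  obtain S :: "'a set" where "top_of_set S homeomorphic_space top_of_set K"
    using assms unfolding has_nontrivial_convergent_sequence_def K_def by blast
  then obtain f g where "homeomorphic_maps (top_of_set S) (top_of_set K) f g"
    unfolding homeomorphic_space_def by blast
  then have g_cont: "continuous_map (top_of_set K) (top_of_set S) g"
    and f_g: "\<And>y. y \<in> K \<Longrightarrow> f (g y) = y"
    unfolding homeomorphic_maps_def by auto
  define r where "r n = 1 / real (Suc n)" for n
  have r_in_K: "r n \<in> K" for n
    unfolding K_def r_def by (intro insertI2 CollectI exI[of _ "Suc n"]) simp
  have zero_in_K: "0 \<in> K" unfolding K_def by blast
  have "r \<longlonglongrightarrow> 0"
    using LIMSEQ_inverse_real_of_nat unfolding r_def by (simp add: inverse_eq_divide)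
  then have "limitin (top_of_set K) r 0 sequentially"
    unfolding limitin_subtopology using r_in_K zero_in_K by simp
  from continuous_map_limit[OF g_cont this]
  have "(g \<circ> r) \<longlonglongrightarrow> g 0"
    unfolding limitin_subtopology by simp
  moreover have "(g \<circ> r) n \<noteq> g 0" for n
  proof
    assume "(g \<circ> r) n = g 0"
    then have "r n = 0" using f_g[OF r_in_K[of n]] f_g[OF zero_in_K] by (metis comp_apply)
    then show False unfolding r_def by simp
  qed
  ultimately show ?thesis using that by blast
qed

text \<open>Normality is used in the subspace
  \<open>X - {p}\<close>, where \<open>range t\<close> becomes closed.\<close>
lemma hereditarily_normal_sequence_separation:
  fixes t :: "nat \<Rightarrow> 'a::t1_space"
  assumes hn: "\<And>S::'a set. normal_space (top_of_set S)"
    and lim: "t \<longlonglongrightarrow> p" and t_ne: "\<And>n. t n \<noteq> p"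
  obtains E :: "nat \<Rightarrow> 'a set" and U V where "\<And>n. open (E n)" "\<And>n. p \<in> E n"
    "open U" "open V" "U \<inter> V = {}" "range t \<subseteq> V" "(\<Inter>n. E n) - {p} \<subseteq> U"
proof -
  have "t1_space (euclidean :: 'a topology)"
    unfolding t1_space_def by (simp add: t1_space)
  then have Hausdorff: "Hausdorff_space (euclidean :: 'a topology)"
    using normal_t1_imp_Hausdorff_space hn[of UNIV] by simp
  have "\<exists>D E. open D \<and> open E \<and> t n \<in> D \<and> p \<in> E \<and> D \<inter> E = {}" for n
    using Hausdorff t_ne[of n] unfolding Hausdorff_space_def disjnt_def by auto
  then obtain D E where DE: "\<And>n. open (D n) \<and> open (E n) \<and> t n \<in> D n \<and> p \<in> E n \<and> D n \<inter> E n = {}"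
    by metis
  text \<open>The convergent sequence together with its limit is compact, hence closed.\<close>
  have "compactin euclidean (insert p (range t))"
    by (rule compactin_sequence_with_limit) (use lim in auto)
  then have "closedin euclidean (insert p (range t))"
    using Hausdorff compactin_imp_closedin by blast
  then have closed_seq: "closed (insert p (range t))" by simp
  define Z where "Z = - {p}"
  have open_Z: "open Z" unfolding Z_def by (simp add: open_Compl)
  text \<open>\<open>R\<close> is closed, disjoint from \<open>range t\<close>, and contains every point of \<open>\<Inter>n. E n\<close>.\<close>
  define R where "R = - (\<Union>n. D n)"
  have "closedin (top_of_set Z) (R \<inter> Z)"
    using closedin_closed_Int[of R Z] DE unfolding R_def by (auto simp: Int_commute)
  moreover have "closedin (top_of_set Z) (range t)"
  proof -
    have "insert p (range t) \<inter> Z = range t" unfolding Z_def using t_ne by auto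
    then show ?thesis using closedin_closed_Int[OF closed_seq, of Z] by (simp add: Int_commute)
  qed
  moreover have "disjnt (R \<inter> Z) (range t)"
    unfolding R_def disjnt_def using DE by blast
  ultimately obtain U V where UV: "openin (top_of_set Z) U" "openin (top_of_set Z) V"
    "R \<inter> Z \<subseteq> U" "range t \<subseteq> V" "disjnt U V"
    using hn[of Z] unfolding normal_space_def by metis
  have "open U" "open V" using UV(1,2) open_Z openin_open_trans by blast+
  moreover have "(\<Inter>n. E n) - {p} \<subseteq> U"
    using UV(3) DE unfolding R_def Z_def by blast
  ultimately show ?thesis
    using that[of E U V] DE UV(4,5) unfolding disjnt_def by blast
qed

lemma limit_point_gdelta:
  fixes p :: "'a::{t1_space, group_add}" and t :: "nat \<Rightarrow> 'a"
  assumes add: "continuous_on (UNIV :: ('a \<times> 'a) set) (\<lambda>p. fst p + snd p)"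
    and hn: "\<And>S::'a set. normal_space (top_of_set S)"
    and lim: "t \<longlonglongrightarrow> p" and t_ne: "\<And>n. t n \<noteq> p"
  obtains \<O> :: "'a set set" where "countable \<O>" "\<forall>W\<in>\<O>. open W" "\<Inter>\<O> = {p}"
proof -
  obtain E :: "nat \<Rightarrow> 'a set" and U V where E: "\<And>n. open (E n)" "\<And>n. p \<in> E n"
    and UV: "open U" "open V" "U \<inter> V = {}" "range t \<subseteq> V" "(\<Inter>n. E n) - {p} \<subseteq> U"
    using hereditarily_normal_sequence_separation[OF hn lim t_ne] by blast
  define T where "T n = (\<lambda>x. x + (- p + t n)) -` V" for n
  have T_open: "open (T n)" for n
    unfolding T_def
    by (rule open_vimage[OF UV(2) continuous_on_add_of_continuous_addition
          [OF add continuous_on_id continuous_on_const]])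
  have p_in_T: "p \<in> T n" for n
    unfolding T_def using UV(4) by (auto simp: add.assoc[symmetric])
  have "\<Inter>(range T \<union> range E) \<subseteq> {p}"
  proof
    fix x assume x: "x \<in> \<Inter>(range T \<union> range E)"
    show "x \<in> {p}"
    proof (rule ccontr)
      assume "x \<notin> {p}"
      with x UV(5) have "x \<in> U" by blast
      then have "\<forall>\<^sub>F n in sequentially. x + (- p + t n) \<in> U"
        using translated_sequence_tendsto[OF add lim] UV(1) topological_tendstoD by blast
      then obtain n where "x + (- p + t n) \<in> U"
        using eventually_sequentially by auto
      then have "x \<notin> T n" using UV(3) unfolding T_def by auto
      then show False using x by auto
    qed
  qed
  then have "\<Inter>(range T \<union> range E) = {p}"
    using p_in_T E(2) by blast
  moreover have "\<forall>W\<in>range T \<union> range E. open W"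
    using T_open E(1) by blast
  ultimately show ?thesis
    using that[of "range T \<union> range E"] by simp
qed

text \<open>In a group with continuous operations, a single \<open>G\<^sub>\<delta>\<close> point makes the diagonal a
  \<open>G\<^sub>\<delta>\<close> set: the diagonal is the preimage of \<open>{p}\<close> under \<open>(x, y) \<mapsto> x - y + p\<close>.\<close>
lemma gdelta_diagonal_of_gdelta_point:
  fixes p :: "'a::{topological_space, group_add}"
  assumes add: "continuous_on (UNIV :: ('a \<times> 'a) set) (\<lambda>p. fst p + snd p)"
    and neg: "continuous_on (UNIV :: 'a set) uminus"
    and \<O>: "countable \<O>" "\<forall>W\<in>\<O>. open W" "\<Inter>\<O> = {p}"
  shows "\<exists>\<U> :: ('a \<times> 'a) set set. countable \<U> \<and> (\<forall>U\<in>\<U>. open U) \<and>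
           \<Inter>\<U> = {(x, x) | x. True}"
proof -
  define h where "h = (\<lambda>q::'a \<times> 'a. fst q + - snd q + p)"
  have "continuous_on (UNIV::('a \<times> 'a) set) (\<lambda>q. - snd q)"
    using continuous_on_compose2[OF neg continuous_on_snd[OF continuous_on_id]] by simp
  then have "continuous_on (UNIV::('a \<times> 'a) set) (\<lambda>q. fst q + - snd q)"
    by (rule continuous_on_add_of_continuous_addition[OF add continuous_on_fst[OF continuous_on_id]])
  then have h_cont: "continuous_on UNIV h"
    unfolding h_def by (rule continuous_on_add_of_continuous_addition[OF add _ continuous_on_const])
  have h_eq_p: "h (a, b) = p \<longleftrightarrow> a = b" for a b
    unfolding h_def by (simp add: add_right_cancel[of _ p 0, simplified] flip: diff_conv_add_uminus)
  define \<U> where "\<U> = (\<lambda>W. h -` W) ` \<O>"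
  have "countable \<U>" unfolding \<U>_def using \<O>(1) by simp
  moreover have "\<forall>U\<in>\<U>. open U"
    unfolding \<U>_def using \<O>(2) open_vimage[OF _ h_cont] by blast
  moreover have "\<Inter>\<U> = h -` {p}"
    unfolding \<U>_def \<O>(3)[symmetric] by auto
  moreover have "h -` {p} = {(x, x) | x. True}"
    using h_eq_p by auto
  ultimately show ?thesis by metis
qed

theorem theorem2p3:
  fixes G :: "('a::{t1_space, group_add}) itself"
  assumes "topological_group G"
    and "hereditarily_normal G"
    and "has_nontrivial_convergent_sequence G"
  shows "has_gdelta_diagonal G"
proof -
  have add: "continuous_on (UNIV :: ('a \<times> 'a) set) (\<lambda>p. fst p + snd p)"
    and neg: "continuous_on (UNIV :: 'a set) uminus"
    using assms(1) unfolding topological_group_def by auto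
  have hn: "\<And>S::'a set. normal_space (top_of_set S)"
    using assms(2) unfolding hereditarily_normal_def by auto
  obtain t :: "nat \<Rightarrow> 'a" and p where "t \<longlonglongrightarrow> p" "\<And>n. t n \<noteq> p"
    using nontrivial_convergent_sequence_obtain[OF assms(3)] by blast
  then obtain \<O> :: "'a set set" where "countable \<O>" "\<forall>W\<in>\<O>. open W" "\<Inter>\<O> = {p}"
    using limit_point_gdelta[OF add hn] by metis
  then show ?thesis
    unfolding has_gdelta_diagonal_def by (rule gdelta_diagonal_of_gdelta_point[OF add neg])
qed

end
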